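(* For every context $\Gamma$ and formula $A$: if the sequent $\Gamma\vdash A$ is derivable in the sequent calculus, then it has a focused derivation.
   Context: Formulas are built from atoms ($p,q,\dots$) by a binary product: every formula is an atom or $A\bullet B$. A context is a finite (possibly empty) list of formulas; commas denote concatenation. The sequent calculus has exactly four rules (no weakening, contraction or exchange): ($\bullet L$) from $A,B,\Delta\vdash C$ infer $A\bullet B,\Delta\vdash C$ (the product must be the leftmost formula); ($\bullet R$) from $\Gamma\vdash A$ and $\Delta\vdash B$ infer $\Gamma,\Delta\vdash A\bullet B$; ($id$) $A\vdash A$; ($cut$) from $\Theta\vdash A$ and $\Gamma,A,\Delta\vdash B$ infer $\Gamma,\Theta,\Delta\vdash B$. A sequent is derivable if it is the conclusion of a finite derivation tree of these rules with no undischarged premises. A context is irreducible if its leftmost formula is not a product (i.e. it is empty or begins with an atom), and reducible otherwise. A focused derivation is a finite derivation tree (with no undischarged premises) using only: the rule ($\bullet L$); the restricted rule ($\bullet R^{foc}$): from $\Gamma\vdash A$ and $\Delta\vdash B$ infer $\Gamma,\Delta\vdash A\bullet B$, where $\Gamma$ is irreducible; and the restricted rule ($id^{atm}$): $p\vdash p$ for atoms $p$ (no cut). *)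

theory Defs
  imports Main
begin

datatype 'a fm = Atom 'a | Prod "'a fm" "'a fm"

inductive deriv :: "'a fm list \<Rightarrow> 'a fm \<Rightarrow> bool" where
  prodL: "deriv (A # B # \<Delta>) C \<Longrightarrow> deriv (Prod A B # \<Delta>) C"
| prodR: "deriv \<Gamma> A \<Longrightarrow> deriv \<Delta> B \<Longrightarrow> deriv (\<Gamma> @ \<Delta>) (Prod A B)"
| idr: "deriv [A] A"
| cut: "deriv \<Theta> A \<Longrightarrow> deriv (\<Gamma> @ [A] @ \<Delta>) B \<Longrightarrow> deriv (\<Gamma> @ \<Theta> @ \<Delta>) B"

definition irreducible :: "'a fm list \<Rightarrow> bool" where
  "irreducible \<Gamma> \<longleftrightarrow> \<Gamma> = [] \<or> (\<exists>p. hd \<Gamma> = Atom p)"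

inductive fderiv :: "'a fm list \<Rightarrow> 'a fm \<Rightarrow> bool" where
  fprodL: "fderiv (A # B # \<Delta>) C \<Longrightarrow> fderiv (Prod A B # \<Delta>) C"
| fprodR: "irreducible \<Gamma> \<Longrightarrow> fderiv \<Gamma> A \<Longrightarrow> fderiv \<Delta> B \<Longrightarrow> fderiv (\<Gamma> @ \<Delta>) (Prod A B)"
| fid: "fderiv [Atom p] (Atom p)"

end

theory Submission
  imports Defs
begin

text \<open>The identity and product-right rules of the full calculus are admissible in the
  focused one: a focused derivation of the left premise of an unrestricted product-right
  can be pushed upwards until its context starts with an atom. Cut is admissible by
  induction on the cut formula: within it, an induction on the focused derivation of the
  right premise moves the cut up to the point where the cut formula is decomposed by
  product-left, and there a cut on a product becomes two cuts on its components.\<close>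

lemma fderiv_nonempty: "fderiv \<Gamma> A \<Longrightarrow> \<Gamma> \<noteq> []"
  by (induction rule: fderiv.induct) auto

lemma fderiv_prodR: "fderiv \<Gamma> A \<Longrightarrow> fderiv \<Delta> B \<Longrightarrow> fderiv (\<Gamma> @ \<Delta>) (Prod A B)"
proof (induction arbitrary: \<Delta> rule: fderiv.induct)
  case (fprodL A B \<Delta>' C)
  then show ?case using fderiv.fprodL by fastforce
next
  case (fprodR \<Gamma>1 A \<Delta>1 B)
  have "irreducible (\<Gamma>1 @ \<Delta>1)"
    using fprodR(1) fderiv_nonempty[OF fprodR(2)] by (auto simp: irreducible_def)
  then show ?case using fderiv.fprodR[OF _ fderiv.fprodR[OF fprodR(1-3)] fprodR(6)] by simp
next
  case (fid p)
  have "irreducible [Atom p]" by (simp add: irreducible_def)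
  from fderiv.fprodR[OF this fderiv.fid fid] show ?case by simp
qed

lemma fderiv_id: "fderiv [A] A"
proof (induction A)
  case (Atom p)
  show ?case by (rule fderiv.fid)
next
  case (Prod A B)
  from fderiv_prodR[OF Prod] show ?case using fderiv.fprodL by fastforce
qed

definition cut_admissible :: "'a fm \<Rightarrow> bool" where
  "cut_admissible A \<longleftrightarrow>
     (\<forall>\<Theta> \<Gamma> \<Delta> C. fderiv \<Theta> A \<longrightarrow> fderiv (\<Gamma> @ [A] @ \<Delta>) C \<longrightarrow> fderiv (\<Gamma> @ \<Theta> @ \<Delta>) C)"

lemma cut_admissibleD:
  "cut_admissible A \<Longrightarrow> fderiv \<Theta> A \<Longrightarrow> fderiv (\<Gamma> @ [A] @ \<Delta>) C \<Longrightarrow> fderiv (\<Gamma> @ \<Theta> @ \<Delta>) C"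
  unfolding cut_admissible_def by blast

text \<open>The principal case: the left premise of a cut on \<open>Prod A B\<close> ends either in
  product-left, which commutes with the cut, or in product-right, whose two premises are
  cut successively against \<open>A\<close> and \<open>B\<close>.\<close>

lemma fderiv_cut_prod:
  assumes "cut_admissible A" and "cut_admissible B"
    and "fderiv \<Theta> (Prod A B)" and "fderiv (A # B # \<Delta>) C"
  shows "fderiv (\<Theta> @ \<Delta>) C"
  using assms(3,4)
proof (induction \<Theta> "Prod A B" arbitrary: \<Delta> rule: fderiv.induct)
  case (fprodL X Y \<Delta>')
  then show ?case using fderiv.fprodL by fastforce
next
  case (fprodR \<Gamma>1 \<Delta>1)
  have "fderiv ([] @ \<Gamma>1 @ (B # \<Delta>)) C"
    using cut_admissibleD[OF assms(1) fprodR(2), of "[]" "B # \<Delta>"] fprodR.prems by simp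
  then have "fderiv (\<Gamma>1 @ [B] @ \<Delta>) C" by simp
  from cut_admissibleD[OF assms(2) fprodR(4) this] show ?case by simp
qed

lemma cut_admissible_step:
  assumes subformulas: "\<And>X Y. A = Prod X Y \<Longrightarrow> cut_admissible X \<and> cut_admissible Y"
  shows "cut_admissible A"
  unfolding cut_admissible_def
proof (intro allI impI)
  fix \<Theta> \<Gamma> \<Delta> C
  assume th: "fderiv \<Theta> A" and "fderiv (\<Gamma> @ [A] @ \<Delta>) C"
  from this(2) show "fderiv (\<Gamma> @ \<Theta> @ \<Delta>) C"
  proof (induction "\<Gamma> @ [A] @ \<Delta>" C arbitrary: \<Gamma> \<Delta> rule: fderiv.induct)
    case (fprodL X Y \<Delta>0 C)
    show ?case
    proof (cases \<Gamma>)
      case Nil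
      then have "A = Prod X Y" "\<Delta> = \<Delta>0" using fprodL by auto
      with fderiv_cut_prod[of X Y \<Theta> \<Delta>0 C] subformulas fprodL th Nil show ?thesis by simp
    next
      case (Cons G \<Gamma>0)
      then have "G = Prod X Y" "\<Delta>0 = \<Gamma>0 @ [A] @ \<Delta>" using fprodL by auto
      with fprodL.hyps(2)[of "X # Y # \<Gamma>0" \<Delta>]
      have "fderiv (X # Y # \<Gamma>0 @ \<Theta> @ \<Delta>) C" by simp
      then show ?thesis using Cons \<open>G = Prod X Y\<close> fderiv.fprodL by fastforce
    qed
  next
    case (fprodR \<Gamma>1 B1 \<Delta>1 B2)
    from \<open>\<Gamma>1 @ \<Delta>1 = \<Gamma> @ [A] @ \<Delta>\<close>
    consider (left) \<Delta>' where "\<Gamma>1 = \<Gamma> @ [A] @ \<Delta>'" "\<Delta> = \<Delta>' @ \<Delta>1"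
      | (right) \<Gamma>' where "\<Delta>1 = \<Gamma>' @ [A] @ \<Delta>" "\<Gamma> = \<Gamma>1 @ \<Gamma>'"
      by (auto simp: append_eq_append_conv2 append_eq_Cons_conv)
    then show ?case
    proof cases
      case left
      from fprodR.hyps(3)[OF left(1)] have "fderiv (\<Gamma> @ \<Theta> @ \<Delta>') B1" .
      from fderiv_prodR[OF this fprodR.hyps(4)] left show ?thesis by simp
    next
      case right
      from fprodR.hyps(5)[OF right(1)] have "fderiv (\<Gamma>' @ \<Theta> @ \<Delta>) B2" .
      from fderiv.fprodR[OF fprodR.hyps(1,2) this] right show ?thesis by simp
    qed
  next
    case (fid p)
    then have "\<Gamma> = []" "\<Delta> = []" "A = Atom p"
      by (auto simp: Cons_eq_append_conv append_eq_Cons_conv)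
    then show ?case using th by simp
  qed
qed

lemma cut_admissible: "cut_admissible A"
  by (induction A) (auto intro: cut_admissible_step)

theorem theorem1p12:
  fixes \<Gamma> :: "'a fm list" and A :: "'a fm"
  assumes "deriv \<Gamma> A"
  shows "fderiv \<Gamma> A"
  using assms
proof (induction rule: deriv.induct)
  case (prodL A B \<Delta> C)
  from prodL.IH show ?case by (rule fderiv.fprodL)
next
  case (prodR \<Gamma> A \<Delta> B)
  from prodR.IH show ?case by (rule fderiv_prodR)
next
  case (idr A)
  show ?case by (rule fderiv_id)
next
  case (cut \<Theta> A \<Gamma> \<Delta> B)
  from cut.IH show ?case by (rule cut_admissibleD[OF cut_admissible])
qed

end
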